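(* Let $p,n,m,N$ be strictly positive integers with $\gcd(n,m)=1$ and $s=\gcd(m,N)>1$; write $m=sm_1$. Let $a_1,\dots,a_N$ be pairwise distinct complex numbers, $\theta_1,\dots,\theta_N\in\mathbb{C}$, $c_1,\dots,c_{p-1}\in\mathbb{C}$, and $\beta_k^{(i)}=\theta_i-\frac{(k-1)n}{m}$ for $k=1,\dots,p$, $i=1,\dots,N$. Let $B^{(1)},\dots,B^{(N)}$ be the upper triangular $p\times p$ matrices with $B^{(i)}_{kk}=\beta_k^{(i)}$, $B^{(i)}_{kl}=0$ if $l<k$ or if $l>k$ and $(l-k)/m_1\notin\mathbb{Z}$, and, if $l>k$ and $(l-k)/m_1\in\mathbb{Z}$, $$B^{(i)}_{kl}=c_{l-k}\sum_{k_1+\dots+k_N+q=N\frac{(l-k)n}{m}}(-1)^q\binom{(l-k)n/m}{k_1}\cdots\binom{(l-k)n/m}{k_N}a_1^{k_1}\cdots a_N^{k_N}a_i^q,$$ the sum being over nonnegative integers $k_1,\dots,k_N,q$. For $j=1,\dots,p-1$ let $$R_j(z)=-\frac{m\,c_j}{jn}\sum_{k_1+\dots+k_N+q=N\frac{jn}{m}}(-1)^q\binom{jn/m}{k_1}\cdots\binom{jn/m}{k_N}a_1^{k_1}\cdots a_N^{k_N}z^q\ \text{ if } j/m_1\in\mathbb{Z},\qquad R_j(z)=0\ \text{ if } j/m_1\notin\mathbb{Z}.$$ Let $D=\mathrm{diag}\big(\prod_{i=1}^N(z-a_i)^{\beta_1^{(i)}},\dots,\prod_{i=1}^N(z-a_i)^{\beta_p^{(i)}}\big)$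 and let $M$ be the upper triangular $p\times p$ matrix with $M_{kk}=1$, $M_{kl}=0$ for $l<k$, and for $l>k$ $$M_{kl}=\sum_{q\vdash(l-k)}\prod_{j=1}^{l-k}\frac{R_j^{\sigma_q(j)}}{\sigma_q(j)!}.$$ Then $\Phi=MD$ solves the Fuchsian system $\frac{\mathrm{d}\Phi}{\mathrm{d}z}=\sum_{i=1}^N\frac{B^{(i)}}{z-a_i}\Phi$ on $\mathbb{C}\setminus\{a_1,\dots,a_N\}$.
   Context: Generalized binomial coefficients: $\binom{\beta}{j}=\frac{\beta(\beta-1)\cdots(\beta-j+1)}{j!}$ for $\beta\in\mathbb{R}$, $j\in\mathbb{N}$, and $\binom{\beta}{0}=1$. In the sums over partitions, $q\vdash(l-k)$ ranges over the partitions of the integer $l-k$ and $\sigma_q(j)$ is the number of parts of $q$ equal to $j$. Powers $(z-a_i)^\beta$ are understood via a chosen branch and analytic continuation. *)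

theory Defs
  imports "HOL-Analysis.Analysis" "HOL-Library.Multiset"
begin

text \<open>Indices of matrices run over 1..p, the points a_i over i = 1..N.\<close>

definition bsum :: "nat \<Rightarrow> (nat \<Rightarrow> complex) \<Rightarrow> complex \<Rightarrow> nat \<Rightarrow> complex \<Rightarrow> complex" where
  "bsum N a e K w =
     (\<Sum>k\<in>{k::nat\<Rightarrow>nat. (\<forall>i. k i \<noteq> 0 \<longrightarrow> i \<in> {1..N}) \<and> sum k {1..N} \<le> K}.
        (-1) ^ (K - sum k {1..N}) * (\<Prod>i=1..N. (e gchoose k i) * a i ^ k i)
        * w ^ (K - sum k {1..N}))"

definition beta :: "nat \<Rightarrow> nat \<Rightarrow> (nat \<Rightarrow> complex) \<Rightarrow> nat \<Rightarrow> nat \<Rightarrow> complex" where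
  "beta n m \<theta> i k = \<theta> i - of_nat ((k - 1) * n) / of_nat m"

text \<open>The matrices B^(i); m1 = m / gcd(m,N). For m1 dvd d, N d n / m is an integer.\<close>
definition Bmat :: "nat \<Rightarrow> nat \<Rightarrow> nat \<Rightarrow> nat \<Rightarrow> (nat \<Rightarrow> complex) \<Rightarrow> (nat \<Rightarrow> complex)
    \<Rightarrow> (nat \<Rightarrow> complex) \<Rightarrow> nat \<Rightarrow> nat \<Rightarrow> nat \<Rightarrow> complex" where
  "Bmat N n m m1 a \<theta> c i k l =
     (if k = l then beta n m \<theta> i k
      else if k < l \<and> m1 dvd (l - k) then
        c (l - k) * bsum N a (of_nat ((l - k) * n) / of_nat m) (N * (l - k) * n div m) (a i)
      else 0)"

definition Rfun :: "nat \<Rightarrow> nat \<Rightarrow> nat \<Rightarrow> nat \<Rightarrow> (nat \<Rightarrow> complex) \<Rightarrow> (nat \<Rightarrow> complex)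
    \<Rightarrow> nat \<Rightarrow> complex \<Rightarrow> complex" where
  "Rfun N n m m1 a c j z =
     (if m1 dvd j then
        - (of_nat m * c j / (of_nat j * of_nat n))
          * bsum N a (of_nat (j * n) / of_nat m) (N * j * n div m) z
      else 0)"

text \<open>Partitions of d, as multisets of positive integers summing to d;
  sigma_q(j) = count q j.\<close>
definition partitions_of :: "nat \<Rightarrow> nat multiset set" where
  "partitions_of d = {q. set_mset q \<subseteq> {1..d} \<and> sum_mset q = d}"

definition Mmat :: "nat \<Rightarrow> nat \<Rightarrow> nat \<Rightarrow> nat \<Rightarrow> (nat \<Rightarrow> complex) \<Rightarrow> (nat \<Rightarrow> complex)
    \<Rightarrow> nat \<Rightarrow> nat \<Rightarrow> complex \<Rightarrow> complex" where
  "Mmat N n m m1 a c k l z =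
     (if k = l then 1
      else if l < k then 0
      else (\<Sum>q\<in>partitions_of (l - k).
              \<Prod>j=1..l - k. Rfun N n m m1 a c j z ^ count q j / fact (count q j)))"

end

(*
  The off-diagonal entries of M are the Taylor coefficients P_d of exp (sum_j R_j t^j), so
  d P_d = sum_j j R_j P_(d-j) and P_d' = sum_j R_j' P_(d-j).

  For m1 dvd j put e = j n / m and K = N e, an integer. Up to the sign (-1)^K, the binomial
  sum F in R_j is the polynomial part at infinity of prod_i (w - a_i)^e = w^K prod_i (1 - a_i/w)^e.
  The logarithmic derivative of the power series prod_i (1 - a_i X)^e yields a Newton-type
  recurrence for its coefficients, which is equivalent to F' = e sum_i (F(z) - F(a_i)) / (z - a_i).
  Hence R_j' = j (n/m) H R_j + sum_i B^(i)_(k,k+j) / (z - a_i) with H = sum_i 1 / (z - a_i).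

  Differentiating P_(l-k) times the l-th diagonal entry of D, the terms (l-k) (n/m) H P_(l-k)
  produced by the R_j cancel against beta_l = beta_k - (l-k) n/m in the logarithmic derivative
  of that entry, and what remains is the (k,l) entry of sum_i B^(i) Phi / (z - a_i).
*)

theory Submission
  imports Defs "HOL-Computational_Algebra.Formal_Power_Series"
begin

no_notation vec_nth (infixl \<open>$\<close> 90)
notation fps_nth (infixl \<open>$\<close> 75)

section \<open>Binomial sums as coefficients of a product of binomial series\<close>

definition fps_lin_binomial :: "complex \<Rightarrow> complex \<Rightarrow> complex fps" where
  "fps_lin_binomial e a = Abs_fps (\<lambda>n. (e gchoose n) * (- a) ^ n)"

definition fps_lin_geometric :: "complex \<Rightarrow> complex fps" where
  "fps_lin_geometric a = Abs_fps (\<lambda>n. if n = 0 then 0 else a ^ n)"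

lemma one_minus_lin_mult_nth:
  fixes f :: "'a::comm_ring_1 fps"
  shows "((1 - fps_const a * fps_X) * f) $ n = f $ n - (if n = 0 then 0 else a * f $ (n - 1))"
proof -
  have "(1 - fps_const a * fps_X) * f = f - fps_const a * (fps_X * f)"
    by (simp add: algebra_simps)
  then show ?thesis by (simp add: fps_X_mult_nth)
qed

lemma fps_lin_binomial_deriv:
  "(1 - fps_const a * fps_X) * fps_deriv (fps_lin_binomial e a)
     = - fps_const (e * a) * fps_lin_binomial e a"
proof (rule fps_ext)
  fix n
  have absorb: "of_nat (Suc k) * (e gchoose Suc k) = (e - of_nat k) * (e gchoose k)" for k
    using gbinomial_mult_1[of e k] by (simp add: algebra_simps)
  have "of_nat (Suc n) * (e gchoose Suc n) * (- a) ^ Suc n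
          - (if n = 0 then 0 else a * (of_nat n * (e gchoose n) * (- a) ^ n))
        = - (e * a) * ((e gchoose n) * (- a) ^ n)"
    unfolding absorb by (cases n) (simp_all add: algebra_simps)
  then show "((1 - fps_const a * fps_X) * fps_deriv (fps_lin_binomial e a)) $ n
      = (- fps_const (e * a) * fps_lin_binomial e a) $ n"
    by (cases n) (simp_all add: one_minus_lin_mult_nth fps_lin_binomial_def algebra_simps)
qed

lemma fps_lin_geometric_eq: "(1 - fps_const a * fps_X) * fps_lin_geometric a = fps_const a * fps_X"
proof (rule fps_ext)
  fix n
  show "((1 - fps_const a * fps_X) * fps_lin_geometric a) $ n = (fps_const a * fps_X) $ n"
    by (cases n) (auto simp: one_minus_lin_mult_nth fps_lin_geometric_def power_eq_if)
qed

lemma fps_X_mult_deriv_lin_binomial: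
  "fps_X * fps_deriv (fps_lin_binomial e a) = - fps_const e * fps_lin_binomial e a * fps_lin_geometric a"
proof -
  let ?u = "1 - fps_const a * fps_X :: complex fps" and ?h = "fps_lin_binomial e a"
  have "?u $ 0 = 1" by simp
  then have nonzero: "?u \<noteq> 0" by auto
  have "?u * (fps_X * fps_deriv ?h) = fps_X * (?u * fps_deriv ?h)"
    by (rule mult.left_commute)
  also have "\<dots> = - fps_const e * ?h * (fps_const a * fps_X)"
    unfolding fps_lin_binomial_deriv by (simp add: algebra_simps flip: fps_const_mult fps_const_neg)
  also have "\<dots> = - fps_const e * ?h * (?u * fps_lin_geometric a)"
    by (simp only: fps_lin_geometric_eq)
  also have "\<dots> = ?u * (- fps_const e * ?h * fps_lin_geometric a)"
    by (simp add: algebra_simps)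
  finally show ?thesis using nonzero by simp
qed

lemma fps_X_mult_deriv_prod_lin_binomial:
  assumes "finite I"
  shows "fps_X * fps_deriv (\<Prod>i\<in>I. fps_lin_binomial e (a i))
    = - fps_const e * (\<Prod>i\<in>I. fps_lin_binomial e (a i)) * (\<Sum>i\<in>I. fps_lin_geometric (a i))"
  using assms
proof (induction I rule: finite_induct)
  case (insert x F)
  let ?h = "fps_lin_binomial e (a x)" and ?G = "\<Prod>i\<in>F. fps_lin_binomial e (a i)"
  have "fps_X * fps_deriv (?h * ?G) = (fps_X * fps_deriv ?h) * ?G + ?h * (fps_X * fps_deriv ?G)"
    by (simp add: algebra_simps)
  then show ?case
    using insert by (simp add: fps_X_mult_deriv_lin_binomial algebra_simps)
qed simp

lemma prod_lin_binomial_nth_recurrence: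
  fixes e :: complex and a :: "nat \<Rightarrow> complex"
  assumes "finite I"
  defines "G \<equiv> \<Prod>i\<in>I. fps_lin_binomial e (a i)"
  shows "of_nat u * G $ u = - e * (\<Sum>s<u. G $ s * (\<Sum>i\<in>I. a i ^ (u - s)))"
proof -
  have "of_nat u * G $ u = (fps_X * fps_deriv G) $ u"
    by (cases u) simp_all
  also have "\<dots> = (fps_const (- e) * (G * (\<Sum>i\<in>I. fps_lin_geometric (a i)))) $ u"
    unfolding G_def fps_X_mult_deriv_prod_lin_binomial[OF assms(1)] by (simp add: mult.assoc)
  also have "\<dots> = - e * (\<Sum>s\<le>u. G $ s * (if u - s = 0 then 0 else (\<Sum>i\<in>I. a i ^ (u - s))))"
  proof -
    have "(\<Sum>i\<in>I. fps_lin_geometric (a i)) $ v = (if v = 0 then 0 else \<Sum>i\<in>I. a i ^ v)" for v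
      by (simp add: fps_sum_nth fps_lin_geometric_def)
    then show ?thesis
      by (simp only: fps_mult_left_const_nth) (simp add: fps_mult_nth atLeast0AtMost)
  qed
  also have "(\<Sum>s\<le>u. G $ s * (if u - s = 0 then 0 else (\<Sum>i\<in>I. a i ^ (u - s))))
      = (\<Sum>s<u. G $ s * (\<Sum>i\<in>I. a i ^ (u - s)))"
    by (simp add: lessThan_Suc_atMost[symmetric])
  finally show ?thesis .
qed

lemma size_eq_sum_count:
  assumes "finite A" "set_mset X \<subseteq> A"
  shows "size X = sum (count X) A"
proof -
  have "size X = sum (count X) (set_mset X)" by (simp add: size_multiset_overloaded_eq)
  also have "\<dots> = sum (count X) A"
    by (rule sum.mono_neutral_left) (use assms in \<open>auto simp: not_in_iff\<close>)
  finally show ?thesis .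
qed

lemma bsum_index_set_eq:
  "{k::nat\<Rightarrow>nat. (\<forall>i. k i \<noteq> 0 \<longrightarrow> i \<in> {1..N}) \<and> sum k {1..N} \<le> K}
     = count ` {X. set_mset X \<subseteq> {1..N} \<and> size X \<le> K}"
proof (intro equalityI subsetI)
  fix k assume k: "k \<in> {k::nat\<Rightarrow>nat. (\<forall>i. k i \<noteq> 0 \<longrightarrow> i \<in> {1..N}) \<and> sum k {1..N} \<le> K}"
  have "finite {x. 0 < k x}"
    by (rule finite_subset[of _ "{1..N}"]) (use k in auto)
  then have count_eq: "count (Abs_multiset k) = k" by (rule count_Abs_multiset)
  moreover have "set_mset (Abs_multiset k) \<subseteq> {1..N}" using k count_eq by (auto simp: set_mset_def)
  ultimately have "size (Abs_multiset k) = sum k {1..N}"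
    using size_eq_sum_count[of "{1..N}" "Abs_multiset k"] by simp
  with k count_eq \<open>set_mset (Abs_multiset k) \<subseteq> {1..N}\<close>
  show "k \<in> count ` {X. set_mset X \<subseteq> {1..N} \<and> size X \<le> K}"
    by (intro image_eqI[of _ _ "Abs_multiset k"]) auto
next
  fix k assume "k \<in> count ` {X. set_mset X \<subseteq> {1..N} \<and> size X \<le> K}"
  then obtain X where "set_mset X \<subseteq> {1..N}" "size X \<le> K" "k = count X" by blast
  then show "k \<in> {k::nat\<Rightarrow>nat. (\<forall>i. k i \<noteq> 0 \<longrightarrow> i \<in> {1..N}) \<and> sum k {1..N} \<le> K}"
    by (auto simp: size_eq_sum_count[symmetric] count_eq_zero_iff[symmetric])
qed

lemma prod_lin_binomial_nth:
  fixes a :: "nat \<Rightarrow> complex"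
  shows "(\<Prod>i=1..N. fps_lin_binomial e (a i)) $ s
     = (-1) ^ s * (\<Sum>X\<in>multisets_of_size {1..N} s. \<Prod>i=1..N. (e gchoose count X i) * a i ^ count X i)"
proof -
  have "(\<Prod>i=1..N. fps_lin_binomial e (a i)) $ s
      = (\<Sum>X\<in>multisets_of_size {1..N} s. \<Prod>i=1..N. (-1) ^ count X i * ((e gchoose count X i) * a i ^ count X i))"
    by (subst fps_prod_nth') (auto intro!: sum.cong prod.cong
          simp: fps_lin_binomial_def power_minus[of "a _"])
  also have "\<dots> = (\<Sum>X\<in>multisets_of_size {1..N} s.
                     (-1) ^ s * (\<Prod>i=1..N. (e gchoose count X i) * a i ^ count X i))"
  proof (rule sum.cong[OF refl])
    fix X assume "X \<in> multisets_of_size {1..N} s"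
    then have "s = sum (count X) {1..N}"
      using size_eq_sum_count[of "{1..N}" X] by (simp add: multisets_of_size_def)
    then show "(\<Prod>i=1..N. (-1) ^ count X i * ((e gchoose count X i) * a i ^ count X i))
        = (-1) ^ s * (\<Prod>i=1..N. (e gchoose count X i) * a i ^ count X i)"
      by (simp add: prod.distrib power_sum)
  qed
  finally show ?thesis by (simp add: sum_distrib_left)
qed

lemma bsum_eq_prod_lin_binomial_nth:
  fixes N :: nat and a :: "nat \<Rightarrow> complex"
  shows "bsum N a e K w = (-1) ^ K * (\<Sum>s\<le>K. (\<Prod>i=1..N. fps_lin_binomial e (a i)) $ s * w ^ (K - s))"
proof -
  let ?MS = "{X. set_mset X \<subseteq> {1..N} \<and> size X \<le> K}"
  let ?t = "\<lambda>k. \<Prod>i=1..N. (e gchoose k i) * a i ^ k i"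
  let ?f = "\<lambda>k. (-1) ^ (K - sum k {1..N}) * ?t k * w ^ (K - sum k {1..N})"
  have inj: "inj_on count ?MS" by (auto intro: inj_onI simp: count_inject)
  have fin: "finite ?MS"
  proof (rule finite_subset)
    show "?MS \<subseteq> (\<Union>s\<le>K. multisets_of_size {1..N} s)" by (auto simp: multisets_of_size_def)
  qed (auto intro: finite_multisets_of_size)
  have "bsum N a e K w = (\<Sum>X\<in>?MS. ?f (count X))"
    unfolding bsum_def bsum_index_set_eq by (rule sum.reindex[OF inj, unfolded comp_def])
  also have "\<dots> = (\<Sum>s\<le>K. \<Sum>X\<in>{X\<in>?MS. size X = s}. ?f (count X))"
    by (rule sum.group[symmetric]) (use fin in auto)
  also have "\<dots> = (\<Sum>s\<le>K. (-1) ^ K * ((\<Prod>i=1..N. fps_lin_binomial e (a i)) $ s * w ^ (K - s)))"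
  proof (rule sum.cong[OF refl])
    fix s assume "s \<in> {..K}"
    then have sign: "(-1::complex) ^ (K - s) = (-1) ^ K * (-1) ^ s"
      by (cases "even s") (simp_all add: power_diff)
    have set_eq: "{X\<in>?MS. size X = s} = multisets_of_size {1..N} s"
      using \<open>s \<in> {..K}\<close> by (auto simp: multisets_of_size_def)
    have "(\<Sum>X\<in>{X\<in>?MS. size X = s}. ?f (count X))
        = (\<Sum>X\<in>multisets_of_size {1..N} s. (-1) ^ (K - s) * ?t (count X) * w ^ (K - s))"
      unfolding set_eq
    proof (rule sum.cong[OF refl])
      fix X assume "X \<in> multisets_of_size {1..N} s"
      then have "sum (count X) {1..N} = s"
        using size_eq_sum_count[of "{1..N}" X] by (simp add: multisets_of_size_def)
      then show "?f (count X) = (-1) ^ (K - s) * ?t (count X) * w ^ (K - s)" by simp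
    qed
    also have "\<dots> = (-1) ^ K * (((-1) ^ s * (\<Sum>X\<in>multisets_of_size {1..N} s. ?t (count X))) * w ^ (K - s))"
      unfolding sign by (simp add: sum_distrib_left sum_distrib_right mult_ac)
    finally show "(\<Sum>X\<in>{X\<in>?MS. size X = s}. ?f (count X))
        = (-1) ^ K * ((\<Prod>i=1..N. fps_lin_binomial e (a i)) $ s * w ^ (K - s))"
      by (simp only: prod_lin_binomial_nth)
  qed
  finally show ?thesis by (simp add: sum_distrib_left)
qed

lemma sum_divided_differences_poly:
  fixes \<gamma> a :: "nat \<Rightarrow> complex" and z :: complex and K :: nat
  defines "F \<equiv> \<lambda>w. \<Sum>s\<le>K. \<gamma> s * w ^ (K - s)"
  assumes z: "\<And>i. i \<in> {1..N} \<Longrightarrow> z \<noteq> a i"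
  shows "(\<Sum>i=1..N. (F z - F (a i)) / (z - a i))
       = (\<Sum>u<K. z ^ (K - Suc u) * (\<Sum>s\<le>u. \<gamma> s * (\<Sum>i=1..N. a i ^ (u - s))))"
proof -
  define p where "p j = (\<Sum>i=1..N. a i ^ j)" for j
  have quotient: "(z ^ n - a i ^ n) / (z - a i) = (\<Sum>j<n. z ^ (n - Suc j) * a i ^ j)"
    if "i \<in> {1..N}" for i n
    using power_diff_sumr2[of "a i" n z] z[OF that] by (simp add: field_simps)
  have "(\<Sum>i=1..N. (F z - F (a i)) / (z - a i))
      = (\<Sum>i=1..N. \<Sum>s\<le>K. \<gamma> s * ((z ^ (K - s) - a i ^ (K - s)) / (z - a i)))"
    unfolding F_def by (simp add: sum_subtractf[symmetric] sum_divide_distrib algebra_simps)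
  also have "\<dots> = (\<Sum>i=1..N. \<Sum>s\<le>K. \<Sum>j<K - s. \<gamma> s * z ^ (K - s - Suc j) * a i ^ j)"
    by (simp add: quotient sum_distrib_left mult.assoc)
  also have "\<dots> = (\<Sum>s\<le>K. \<Sum>j<K - s. \<gamma> s * z ^ (K - s - Suc j) * p j)"
    unfolding p_def sum_distrib_left by (subst sum.swap) (rule sum.cong[OF refl], rule sum.swap)
  also have "\<dots> = (\<Sum>(s, j)\<in>{(s, j). s + j < K}. \<gamma> s * z ^ (K - s - Suc j) * p j)"
  proof -
    have "{(s, j). s + j < K} = Sigma {..<K} (\<lambda>s. {..<K - s})" by auto
    then show ?thesis by (simp add: sum.Sigma lessThan_Suc_atMost[symmetric])
  qed
  also have "\<dots> = (\<Sum>u<K. \<Sum>s\<le>u. \<gamma> s * z ^ (K - s - Suc (u - s)) * p (u - s))"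
    by (rule sum.triangle_reindex)
  also have "\<dots> = (\<Sum>u<K. z ^ (K - Suc u) * (\<Sum>s\<le>u. \<gamma> s * p (u - s)))"
    by (intro sum.cong refl) (simp add: sum_distrib_left algebra_simps)
  finally show ?thesis by (simp only: p_def)
qed

lemma newton_recurrence_deriv_eq:
  fixes \<gamma> a :: "nat \<Rightarrow> complex" and e z :: complex and K :: nat
  defines "F \<equiv> \<lambda>w. \<Sum>s\<le>K. \<gamma> s * w ^ (K - s)"
  assumes z: "\<And>i. i \<in> {1..N} \<Longrightarrow> z \<noteq> a i"
    and rec: "\<And>u. u < K \<Longrightarrow> of_nat (K - u) * \<gamma> u = e * (\<Sum>s\<le>u. \<gamma> s * (\<Sum>i=1..N. a i ^ (u - s)))"
  shows "(\<Sum>s\<le>K. \<gamma> s * (of_nat (K - s) * z ^ (K - s - 1)))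
       = e * (\<Sum>i=1..N. (F z - F (a i)) / (z - a i))"
proof -
  have "(\<Sum>i=1..N. (F z - F (a i)) / (z - a i))
      = (\<Sum>u<K. z ^ (K - Suc u) * (\<Sum>s\<le>u. \<gamma> s * (\<Sum>i=1..N. a i ^ (u - s))))"
    unfolding F_def by (rule sum_divided_differences_poly[OF z])
  then have "e * (\<Sum>i=1..N. (F z - F (a i)) / (z - a i))
      = (\<Sum>u<K. z ^ (K - Suc u) * (e * (\<Sum>s\<le>u. \<gamma> s * (\<Sum>i=1..N. a i ^ (u - s)))))"
    by (simp add: sum_distrib_left mult.left_commute)
  also have "\<dots> = (\<Sum>u<K. \<gamma> u * (of_nat (K - u) * z ^ (K - u - 1)))"
  proof (rule sum.cong[OF refl])
    fix u assume "u \<in> {..<K}"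
    then have "e * (\<Sum>s\<le>u. \<gamma> s * (\<Sum>i=1..N. a i ^ (u - s))) = of_nat (K - u) * \<gamma> u"
      by (simp only: rec lessThan_iff)
    then show "z ^ (K - Suc u) * (e * (\<Sum>s\<le>u. \<gamma> s * (\<Sum>i=1..N. a i ^ (u - s))))
        = \<gamma> u * (of_nat (K - u) * z ^ (K - u - 1))"
      by (simp add: mult_ac)
  qed
  also have "\<dots> = (\<Sum>s\<le>K. \<gamma> s * (of_nat (K - s) * z ^ (K - s - 1)))"
    by (simp add: lessThan_Suc_atMost[symmetric])
  finally show ?thesis ..
qed

lemma bsum_has_field_derivative:
  fixes N :: nat and a :: "nat \<Rightarrow> complex"
  assumes K: "of_nat K = of_nat N * e" and z: "\<And>i. i \<in> {1..N} \<Longrightarrow> z \<noteq> a i"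
  shows "(bsum N a e K has_field_derivative
           e * (\<Sum>i=1..N. (bsum N a e K z - bsum N a e K (a i)) / (z - a i))) (at z)"
proof -
  define G where "G = (\<Prod>i=1..N. fps_lin_binomial e (a i))"
  define F where "F w = (\<Sum>s\<le>K. G $ s * w ^ (K - s))" for w
  have bsum_F: "bsum N a e K = (\<lambda>w. (-1) ^ K * F w)"
    by (simp add: fun_eq_iff F_def G_def bsum_eq_prod_lin_binomial_nth)
  have rec: "of_nat (K - u) * G $ u = e * (\<Sum>s\<le>u. G $ s * (\<Sum>i=1..N. a i ^ (u - s)))"
    if "u < K" for u
  proof -
    have "of_nat u * G $ u = - e * (\<Sum>s<u. G $ s * (\<Sum>i=1..N. a i ^ (u - s)))"
      unfolding G_def by (rule prod_lin_binomial_nth_recurrence) simp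
    moreover have "(of_nat (K - u) :: complex) = of_nat N * e - of_nat u"
      using that K by (simp add: of_nat_diff)
    moreover have "(\<Sum>s\<le>u. G $ s * (\<Sum>i=1..N. a i ^ (u - s)))
        = (\<Sum>s<u. G $ s * (\<Sum>i=1..N. a i ^ (u - s))) + G $ u * of_nat N"
      by (simp add: lessThan_Suc_atMost[symmetric])
    ultimately show ?thesis by algebra
  qed
  have "(F has_field_derivative (\<Sum>s\<le>K. G $ s * (of_nat (K - s) * z ^ (K - s - 1)))) (at z)"
  proof -
    have "((\<lambda>w. w ^ k) has_field_derivative of_nat k * z ^ (k - 1)) (at z)" for k
      using DERIV_power[OF DERIV_ident, of k z UNIV] by simp
    then show ?thesis unfolding F_def by (intro DERIV_sum DERIV_cmult)
  qed
  then have "(F has_field_derivative e * (\<Sum>i=1..N. (F z - F (a i)) / (z - a i))) (at z)"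
    using newton_recurrence_deriv_eq[of N z a K "fps_nth G" e, OF z rec]
    by (simp add: F_def)
  from DERIV_cmult[OF this, of "(-1) ^ K"] show ?thesis
    unfolding bsum_F by (simp add: sum_distrib_left diff_divide_distrib algebra_simps)
qed

section \<open>Sums over partitions\<close>

definition partition_weight :: "nat \<Rightarrow> (nat \<Rightarrow> complex) \<Rightarrow> nat multiset \<Rightarrow> complex" where
  "partition_weight d R q = (\<Prod>j=1..d. R j ^ count q j / fact (count q j))"

text \<open>The coefficient of t powered d in exp (sum_j R_j t powered j).\<close>

definition partition_sum :: "(nat \<Rightarrow> complex) \<Rightarrow> nat \<Rightarrow> complex" where
  "partition_sum R d = (\<Sum>q\<in>partitions_of d. partition_weight d R q)"

lemma size_le_sum_mset: "0 \<notin># q \<Longrightarrow> size q \<le> sum_mset (q :: nat multiset)"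
  by (induction q) auto

lemma mem_le_sum_mset: "x \<in># q \<Longrightarrow> x \<le> sum_mset (q :: nat multiset)"
  by (induction q) auto

lemma sum_mset_eq_sum_count:
  assumes "finite A" "set_mset (q :: nat multiset) \<subseteq> A"
  shows "sum_mset q = (\<Sum>j\<in>A. j * count q j)"
  using assms(2)
proof (induction q)
  case (add x q)
  have "(\<Sum>j\<in>A. j * count (add_mset x q) j) = (\<Sum>j\<in>A. j * count q j + (if j = x then x else 0))"
    by (rule sum.cong) auto
  with add assms(1) show ?case by (simp add: sum.distrib)
qed simp

lemma finite_partitions_of: "finite (partitions_of d)"
proof (rule finite_subset)
  show "partitions_of d \<subseteq> (\<Union>s\<le>d. multisets_of_size {1..d} s)"
  proof
    fix q assume q: "q \<in> partitions_of d"
    then have "size q \<le> d" using size_le_sum_mset[of q] by (force simp: partitions_of_def)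
    with q show "q \<in> (\<Union>s\<le>d. multisets_of_size {1..d} s)"
      by (auto simp: partitions_of_def multisets_of_size_def)
  qed
qed (auto intro: finite_multisets_of_size)

lemma partitions_of_0: "partitions_of 0 = {{#}}"
  by (auto simp: partitions_of_def)

lemma partition_sum_0 [simp]: "partition_sum R 0 = 1"
  by (simp add: partition_sum_def partitions_of_0 partition_weight_def)

lemma partition_weight_mono:
  assumes "d' \<le> d" "set_mset q \<subseteq> {1..d'}"
  shows "partition_weight d R q = partition_weight d' R q"
proof -
  have "count q i = 0" if "i \<notin> {1..d'}" for i
    by (meson assms(2) not_in_iff subsetD that)
  then show ?thesis
    unfolding partition_weight_def by (intro prod.mono_neutral_left[symmetric]) (use assms in auto)
qed

lemma partition_weight_remove:
  assumes j: "j \<in> {1..d}" and "j \<in># q"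
  shows "of_nat (count q j) * partition_weight d R q = R j * partition_weight d R (q - {#j#})"
proof -
  let ?f = "\<lambda>q j. R j ^ count q j / fact (count q j)"
  obtain c where c: "count q j = Suc c" using \<open>j \<in># q\<close> by (metis count_eq_zero_iff not0_implies_Suc)
  have key: "of_nat (count q j) * ?f q j = R j * ?f (q - {#j#}) j"
    by (simp add: c field_simps del: of_nat_Suc)
  have rest: "(\<Prod>i\<in>{1..d}-{j}. ?f q i) = (\<Prod>i\<in>{1..d}-{j}. ?f (q - {#j#}) i)"
    by (rule prod.cong) auto
  have "partition_weight d R q' = ?f q' j * (\<Prod>i\<in>{1..d}-{j}. ?f q' i)" for q'
    unfolding partition_weight_def by (rule prod.remove[OF finite_atLeastAtMost j])
  then show ?thesis
    by (simp only: rest mult.assoc[symmetric] key)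
qed

lemma sum_partitions_containing:
  assumes j: "j \<in> {1..d}"
  shows "(\<Sum>q\<in>{q\<in>partitions_of d. j \<in># q}. f (q - {#j#})) = (\<Sum>q\<in>partitions_of (d - j). f q)"
proof (rule sum.reindex_bij_witness[of _ "add_mset j" "\<lambda>q. q - {#j#}"])
  fix q assume q: "q \<in> {q\<in>partitions_of d. j \<in># q}"
  then show "add_mset j (q - {#j#}) = q" by simp
  moreover have "sum_mset q = d" using q by (simp add: partitions_of_def)
  ultimately have "sum_mset (add_mset j (q - {#j#})) = d" by simp
  then have sum_eq: "sum_mset (q - {#j#}) = d - j" by simp
  moreover have "x \<in> {1..d - j}" if "x \<in># q - {#j#}" for x
    using that q mem_le_sum_mset[OF that] sum_eq by (auto simp: partitions_of_def dest: in_diffD)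
  ultimately show "q - {#j#} \<in> partitions_of (d - j)" by (auto simp: partitions_of_def)
next
  fix q assume "q \<in> partitions_of (d - j)"
  with j show "add_mset j q - {#j#} = q" "add_mset j q \<in> {q\<in>partitions_of d. j \<in># q}"
    by (fastforce simp: partitions_of_def)+
qed simp

lemma partition_sum_rec:
  "of_nat d * partition_sum R d = (\<Sum>j=1..d. of_nat j * R j * partition_sum R (d - j))"
proof -
  let ?W = "partition_weight d R"
  have "of_nat d * partition_sum R d
      = (\<Sum>q\<in>partitions_of d. \<Sum>j=1..d. of_nat j * (of_nat (count q j) * ?W q))"
    unfolding partition_sum_def sum_distrib_left
  proof (rule sum.cong[OF refl])
    fix q assume "q \<in> partitions_of d"
    then have "d = (\<Sum>j=1..d. j * count q j)"
      using sum_mset_eq_sum_count[of "{1..d}" q] by (simp add: partitions_of_def)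
    then have "(of_nat d :: complex) = (\<Sum>j=1..d. of_nat j * of_nat (count q j))"
      by (metis (mono_tags, lifting) of_nat_mult of_nat_sum sum.cong)
    then show "of_nat d * ?W q = (\<Sum>j=1..d. of_nat j * (of_nat (count q j) * ?W q))"
      by (simp add: sum_distrib_right mult.assoc)
  qed
  also have "\<dots> = (\<Sum>j=1..d. of_nat j * (\<Sum>q\<in>partitions_of d. of_nat (count q j) * ?W q))"
    by (subst sum.swap) (simp add: sum_distrib_left)
  also have "\<dots> = (\<Sum>j=1..d. of_nat j * R j * partition_sum R (d - j))"
  proof (rule sum.cong[OF refl])
    fix j assume j: "j \<in> {1..d}"
    have "(\<Sum>q\<in>partitions_of d. of_nat (count q j) * ?W q)
        = (\<Sum>q\<in>{q\<in>partitions_of d. j \<in># q}. of_nat (count q j) * ?W q)"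
      by (rule sum.mono_neutral_right) (auto simp: finite_partitions_of not_in_iff)
    also have "\<dots> = (\<Sum>q\<in>{q\<in>partitions_of d. j \<in># q}. R j * ?W (q - {#j#}))"
      using j by (intro sum.cong refl) (auto intro: partition_weight_remove)
    also have "\<dots> = (\<Sum>q\<in>partitions_of (d - j). R j * ?W q)"
      by (rule sum_partitions_containing[OF j])
    also have "\<dots> = R j * partition_sum R (d - j)"
      unfolding partition_sum_def sum_distrib_left
      by (intro sum.cong refl arg_cong[where f = "\<lambda>x. R j * x"] partition_weight_mono)
        (auto simp: partitions_of_def)
    finally show "of_nat j * (\<Sum>q\<in>partitions_of d. of_nat (count q j) * ?W q)
        = of_nat j * R j * partition_sum R (d - j)"
      by simp
  qed
  finally show ?thesis .
qed

lemma sum_triangle_swap: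
  "(\<Sum>j=1..d. \<Sum>i=1..d-j. f i j) = (\<Sum>i=1..(d::nat). \<Sum>j=1..d-i. f i j)"
proof -
  have inner: "(\<Sum>i=1..d-j. f i j) = (\<Sum>i=1..d. if i + j \<le> d then f i j else 0)" for j
  proof -
    have "{i\<in>{1..d}. i + j \<le> d} = {1..d-j}" by auto
    then show ?thesis by (simp add: sum.inter_filter[symmetric])
  qed
  have outer: "(\<Sum>j=1..d-i. f i j) = (\<Sum>j=1..d. if i + j \<le> d then f i j else 0)" for i
  proof -
    have "{j\<in>{1..d}. i + j \<le> d} = {1..d-i}" by auto
    then show ?thesis by (simp add: sum.inter_filter[symmetric])
  qed
  show ?thesis unfolding inner outer by (rule sum.swap)
qed

lemma partition_sum_convolution:
  "(\<Sum>j=1..d. of_nat j * R j * (\<Sum>i=1..d-j. S i * partition_sum R (d - j - i)))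
     = (\<Sum>i=1..d. S i * (of_nat (d - i) * partition_sum R (d - i)))"
proof -
  have "(\<Sum>j=1..d. of_nat j * R j * (\<Sum>i=1..d-j. S i * partition_sum R (d - j - i)))
      = (\<Sum>j=1..d. \<Sum>i=1..d-j. S i * (of_nat j * R j * partition_sum R (d - i - j)))"
    by (simp add: sum_distrib_left mult_ac add.commute)
  also have "\<dots> = (\<Sum>i=1..d. \<Sum>j=1..d-i. S i * (of_nat j * R j * partition_sum R (d - i - j)))"
    by (rule sum_triangle_swap)
  also have "\<dots> = (\<Sum>i=1..d. S i * (of_nat (d - i) * partition_sum R (d - i)))"
    by (simp only: partition_sum_rec sum_distrib_left)
  finally show ?thesis .
qed

lemma partition_sum_has_field_derivative:
  fixes R :: "nat \<Rightarrow> complex \<Rightarrow> complex"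
  assumes R: "\<And>j. 1 \<le> j \<Longrightarrow> (R j has_field_derivative R' j) (at z)"
  shows "((\<lambda>w. partition_sum (\<lambda>j. R j w) d) has_field_derivative
           (\<Sum>j=1..d. R' j * partition_sum (\<lambda>j. R j z) (d - j))) (at z)"
proof (induction d rule: less_induct)
  case (less d)
  let ?P = "\<lambda>w. partition_sum (\<lambda>j. R j w)"
  show ?case
  proof (cases "d = 0")
    case False
    then have d: "(of_nat d :: complex) \<noteq> 0" by simp
    have rec: "?P w d = (\<Sum>j=1..d. of_nat j * R j w * ?P w (d - j)) / of_nat d" for w
      using partition_sum_rec[of d "\<lambda>j. R j w"] d by (simp add: field_simps)
    have "((\<lambda>w. of_nat j * R j w * ?P w (d - j)) has_field_derivative
        of_nat j * R' j * ?P z (d - j) + of_nat j * R j z * (\<Sum>i=1..d-j. R' i * ?P z (d - j - i))) (at z)"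
      if "j \<in> {1..d}" for j
    proof -
      from that have "1 \<le> j" "d - j < d" by auto
      from DERIV_mult[OF DERIV_cmult[OF R[OF this(1)], of "of_nat j"] less[OF this(2)]]
      show ?thesis by (simp add: mult.commute)
    qed
    then have "((\<lambda>w. (\<Sum>j=1..d. of_nat j * R j w * ?P w (d - j)) / of_nat d) has_field_derivative
        (\<Sum>j=1..d. of_nat j * R' j * ?P z (d - j)
           + of_nat j * R j z * (\<Sum>i=1..d-j. R' i * ?P z (d - j - i))) / of_nat d) (at z)"
      by (intro DERIV_cdivide DERIV_sum)
    moreover have "(\<Sum>j=1..d. of_nat j * R' j * ?P z (d - j)
           + of_nat j * R j z * (\<Sum>i=1..d-j. R' i * ?P z (d - j - i)))
        = of_nat d * (\<Sum>j=1..d. R' j * ?P z (d - j))"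
    proof -
      have "(\<Sum>j=1..d. of_nat j * R' j * ?P z (d - j)
             + of_nat j * R j z * (\<Sum>i=1..d-j. R' i * ?P z (d - j - i)))
          = (\<Sum>j=1..d. of_nat j * R' j * ?P z (d - j) + R' j * (of_nat (d - j) * ?P z (d - j)))"
        by (simp only: sum.distrib partition_sum_convolution)
      also have "\<dots> = (\<Sum>j=1..d. of_nat d * (R' j * ?P z (d - j)))"
        by (rule sum.cong[OF refl]) (simp add: of_nat_diff algebra_simps)
      finally show ?thesis by (simp only: sum_distrib_left)
    qed
    ultimately show ?thesis using d by (simp add: rec)
  qed simp
qed

lemma partition_sum_mult_has_field_derivative:
  fixes R :: "nat \<Rightarrow> complex \<Rightarrow> complex" and \<Phi> :: "complex \<Rightarrow> complex"
  assumes R: "\<And>j. 1 \<le> j \<Longrightarrow> (R j has_field_derivative of_nat j * h * R j z + S j) (at z)"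
    and \<Phi>: "(\<Phi> has_field_derivative (\<mu> - of_nat d * h) * \<Phi> z) (at z)"
  shows "((\<lambda>w. partition_sum (\<lambda>j. R j w) d * \<Phi> w) has_field_derivative
           (\<mu> * partition_sum (\<lambda>j. R j z) d
            + (\<Sum>j=1..d. S j * partition_sum (\<lambda>j. R j z) (d - j))) * \<Phi> z) (at z)"
proof -
  let ?P = "partition_sum (\<lambda>j. R j z)"
  have P: "((\<lambda>w. partition_sum (\<lambda>j. R j w) d) has_field_derivative
      (\<Sum>j=1..d. (of_nat j * h * R j z + S j) * ?P (d - j))) (at z)"
    by (rule partition_sum_has_field_derivative) (rule R)
  have sum_eq: "(\<Sum>j=1..d. (of_nat j * h * R j z + S j) * ?P (d - j))
      = h * (of_nat d * ?P d) + (\<Sum>j=1..d. S j * ?P (d - j))"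
    unfolding partition_sum_rec by (simp add: sum.distrib sum_distrib_left algebra_simps)
  from DERIV_mult[OF P \<Phi>, unfolded sum_eq] show ?thesis
    by (rule DERIV_cong) (simp add: algebra_simps)
qed

section \<open>The Fuchsian system\<close>

lemma log_branch_has_field_derivative:
  assumes "open U" "L holomorphic_on U" "\<And>w. w \<in> U \<Longrightarrow> exp (L w) = w - b" "z \<in> U"
  shows "(L has_field_derivative 1 / (z - b)) (at z)"
proof -
  have "L field_differentiable at z"
    using assms(2,1,4) by (rule holomorphic_on_imp_differentiable_at)
  then have L': "(L has_field_derivative deriv L z) (at z)"
    by (simp add: DERIV_deriv_iff_field_differentiable)
  have "((\<lambda>w. w - b) has_field_derivative exp (L z) * deriv L z) (at z)"
    by (rule has_field_derivative_transform_within_open[OF DERIV_fun_exp[OF L'] assms(1,4)])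
      (simp add: assms(3))
  moreover have "((\<lambda>w. w - b) has_field_derivative 1) (at z)"
    using DERIV_diff[OF DERIV_ident DERIV_const[of b]] by simp
  ultimately have "exp (L z) * deriv L z = 1"
    by (rule DERIV_unique)
  then have "(z - b) * deriv L z = 1"
    using assms(3,4) by simp
  then have "deriv L z = 1 / (z - b)"
    by (metis mult_zero_left nonzero_eq_divide_eq zero_neq_one mult.commute)
  with L' show ?thesis by simp
qed

lemma exp_branch_prod_has_field_derivative:
  fixes \<beta> :: "nat \<Rightarrow> complex" and L :: "nat \<Rightarrow> complex \<Rightarrow> complex"
  assumes "\<And>i. i \<in> {1..N} \<Longrightarrow> (L i has_field_derivative 1 / (z - a i)) (at z)"
  shows "((\<lambda>w. \<Prod>i=1..N. exp (\<beta> i * L i w)) has_field_derivative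
           (\<Sum>i=1..N. \<beta> i / (z - a i)) * (\<Prod>i=1..N. exp (\<beta> i * L i z))) (at z)"
proof -
  have "((\<lambda>w. exp (\<Sum>i=1..N. \<beta> i * L i w)) has_field_derivative
      exp (\<Sum>i=1..N. \<beta> i * L i z) * (\<Sum>i=1..N. \<beta> i * (1 / (z - a i)))) (at z)"
    using assms by (intro DERIV_fun_exp DERIV_sum DERIV_cmult)
  then show ?thesis by (simp add: exp_sum mult.commute)
qed

lemma Mmat_eq_partition_sum:
  "r \<le> l \<Longrightarrow> Mmat N n m m1 a c r l w = partition_sum (\<lambda>j. Rfun N n m m1 a c j w) (l - r)"
  by (auto simp: Mmat_def partition_sum_def partition_weight_def partitions_of_0)

lemma beta_shift:
  assumes "1 \<le> k" "k \<le> l"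
  shows "beta n m \<theta> i l = beta n m \<theta> i k - of_nat (l - k) * (of_nat n / of_nat m)"
proof -
  have "(l - 1) * n = (k - 1) * n + (l - k) * n" using assms by (simp add: algebra_simps)
  then show ?thesis unfolding beta_def by (simp add: add_divide_distrib)
qed

lemma Rfun_has_field_derivative:
  fixes a c :: "nat \<Rightarrow> complex"
  assumes "n > 0" "m > 0" "m = gcd m N * m1" "1 \<le> j"
    and z: "\<And>i. i \<in> {1..N} \<Longrightarrow> z \<noteq> a i"
  shows "(Rfun N n m m1 a c j has_field_derivative
           of_nat j * (of_nat n / of_nat m * (\<Sum>i=1..N. 1 / (z - a i))) * Rfun N n m m1 a c j z
           + (\<Sum>i=1..N. Bmat N n m m1 a \<theta> c i k (k + j) / (z - a i))) (at z)"
proof (cases "m1 dvd j")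
  case False
  then have "Rfun N n m m1 a c j = (\<lambda>w. 0)" by (simp add: fun_eq_iff Rfun_def)
  with False \<open>1 \<le> j\<close> show ?thesis by (simp add: Bmat_def)
next
  case True
  define e :: complex where "e = of_nat (j * n) / of_nat m"
  define K where "K = N * j * n div m"
  define F where "F = bsum N a e K"
  have "of_nat K = of_nat N * e"
  proof -
    obtain t where "j = m1 * t" using True by blast
    moreover obtain u where "N = gcd m N * u" by (metis dvd_def gcd_dvd2)
    ultimately have divisible: "N * j * n = m * (u * t * n)"
      using assms(3) by (metis mult.commute mult.left_commute)
    then have "K = u * t * n" unfolding K_def divisible using \<open>m > 0\<close> by simp
    then have "K * m = N * j * n" by (metis divisible mult.commute)
    then have "(of_nat K :: complex) * of_nat m = of_nat N * of_nat j * of_nat n"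
      by (metis of_nat_mult)
    then show ?thesis using \<open>m > 0\<close> by (simp add: e_def field_simps)
  qed
  define \<kappa> where "\<kappa> = - (of_nat m * c j / (of_nat j * of_nat n))"
  define H where "H = (\<Sum>i=1..N. 1 / (z - a i))"
  have Rfun_eq: "Rfun N n m m1 a c j = (\<lambda>w. \<kappa> * F w)"
    using True by (simp add: fun_eq_iff Rfun_def F_def e_def K_def \<kappa>_def)
  have B: "Bmat N n m m1 a \<theta> c i k (k + j) = c j * F (a i)" for i
    using True \<open>1 \<le> j\<close> by (simp add: Bmat_def F_def e_def K_def)
  have "(F has_field_derivative e * (\<Sum>i=1..N. (F z - F (a i)) / (z - a i))) (at z)"
    unfolding F_def using \<open>of_nat K = of_nat N * e\<close> z by (rule bsum_has_field_derivative)
  then have "(Rfun N n m m1 a c j has_field_derivative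
      \<kappa> * (e * (\<Sum>i=1..N. (F z - F (a i)) / (z - a i)))) (at z)"
    unfolding Rfun_eq by (rule DERIV_cmult)
  also have "\<kappa> * (e * (\<Sum>i=1..N. (F z - F (a i)) / (z - a i)))
      = of_nat j * (of_nat n / of_nat m * H) * (\<kappa> * F z) + c j * (\<Sum>i=1..N. F (a i) / (z - a i))"
  proof -
    have split: "(\<Sum>i=1..N. (F z - F (a i)) / (z - a i)) = F z * H - (\<Sum>i=1..N. F (a i) / (z - a i))"
      by (simp add: H_def diff_divide_distrib sum_subtractf sum_distrib_left)
    have "\<kappa> * e = - c j"
      using assms(1,2,4) by (simp add: \<kappa>_def e_def)
    then have \<kappa>e: "\<kappa> * (e * X) = - c j * X" for X
      by (simp only: mult.assoc[symmetric])
    have "of_nat j * (of_nat n / of_nat m * H) * (\<kappa> * F z) = \<kappa> * (e * (F z * H))"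
      by (simp add: e_def mult_ac)
    then show ?thesis
      unfolding split \<kappa>e by (simp add: algebra_simps)
  qed
  finally show ?thesis
    by (simp add: Rfun_eq B H_def sum_distrib_left)
qed

lemma Bmat_Mmat_sum:
  fixes a :: "nat \<Rightarrow> complex"
  assumes k: "k \<in> {1..p}" and l: "l \<le> p"
  shows "(\<Sum>i=1..N. \<Sum>r=1..p. Bmat N n m m1 a \<theta> c i k r * (Mmat N n m m1 a c r l z * \<Phi>) / (z - a i))
    = ((\<Sum>i=1..N. beta n m \<theta> i k / (z - a i)) * Mmat N n m m1 a c k l z
       + (\<Sum>j=1..l-k. (\<Sum>i=1..N. Bmat N n m m1 a \<theta> c i k (k + j) / (z - a i))
                        * Mmat N n m m1 a c (k + j) l z)) * \<Phi>"
proof -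
  let ?B = "Bmat N n m m1 a \<theta> c" and ?M = "Mmat N n m m1 a c"
  define T where "T r = (\<Sum>i=1..N. ?B i k r / (z - a i))" for r
  have "(\<Sum>i=1..N. \<Sum>r=1..p. ?B i k r * (?M r l z * \<Phi>) / (z - a i))
      = (\<Sum>r=1..p. T r * ?M r l z) * \<Phi>"
    by (subst sum.swap) (simp add: T_def sum_distrib_right mult.assoc)
  also have "(\<Sum>r=1..p. T r * ?M r l z) = (\<Sum>r=k..k + (l - k). T r * ?M r l z)"
  proof (rule sum.mono_neutral_right)
    show "\<forall>r\<in>{1..p} - {k..k + (l - k)}. T r * ?M r l z = 0"
      by (auto simp: T_def Bmat_def Mmat_def)
  qed (use k l in auto)
  also have "\<dots> = T k * ?M k l z + (\<Sum>j=1..l-k. T (k + j) * ?M (k + j) l z)"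
  proof -
    have "(\<Sum>r=Suc k..k + (l - k). T r * ?M r l z) = (\<Sum>j=1..l-k. T (k + j) * ?M (k + j) l z)"
      using sum.shift_bounds_cl_nat_ivl[of "\<lambda>r. T r * ?M r l z" 1 k "l - k"]
      by (simp add: add.commute)
    then show ?thesis by (simp add: sum.atLeast_Suc_atMost)
  qed
  finally show ?thesis by (simp add: T_def Bmat_def)
qed

lemma Mmat_mult_has_field_derivative:
  fixes a :: "nat \<Rightarrow> complex" and \<Phi> :: "complex \<Rightarrow> complex"
  assumes "n > 0" "m > 0" "m = gcd m N * m1" "1 \<le> k"
    and z: "\<And>i. i \<in> {1..N} \<Longrightarrow> z \<noteq> a i"
    and \<Phi>: "(\<Phi> has_field_derivative (\<Sum>i=1..N. beta n m \<theta> i l / (z - a i)) * \<Phi> z) (at z)"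
  shows "((\<lambda>w. Mmat N n m m1 a c k l w * \<Phi> w) has_field_derivative
           ((\<Sum>i=1..N. beta n m \<theta> i k / (z - a i)) * Mmat N n m m1 a c k l z
            + (\<Sum>j=1..l-k. (\<Sum>i=1..N. Bmat N n m m1 a \<theta> c i k (k + j) / (z - a i))
                             * Mmat N n m m1 a c (k + j) l z)) * \<Phi> z) (at z)"
proof (cases "k \<le> l")
  case True
  let ?B = "Bmat N n m m1 a \<theta> c" and ?P = "\<lambda>w. partition_sum (\<lambda>j. Rfun N n m m1 a c j w)"
  define \<mu> where "\<mu> = (\<Sum>i=1..N. beta n m \<theta> i k / (z - a i))"
  define h where "h = of_nat n / of_nat m * (\<Sum>i=1..N. 1 / (z - a i))"
  have "(\<Sum>i=1..N. beta n m \<theta> i l / (z - a i))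
      = (\<Sum>i=1..N. (beta n m \<theta> i k - of_nat (l - k) * (of_nat n / of_nat m)) / (z - a i))"
    using \<open>1 \<le> k\<close> True by (simp add: beta_shift[of k l])
  also have "\<dots> = \<mu> - of_nat (l - k) * h"
    by (simp add: \<mu>_def h_def diff_divide_distrib sum_subtractf sum_distrib_left)
  finally have "(\<Phi> has_field_derivative (\<mu> - of_nat (l - k) * h) * \<Phi> z) (at z)"
    using \<Phi> by simp
  moreover have "(Rfun N n m m1 a c j has_field_derivative
      of_nat j * h * Rfun N n m m1 a c j z + (\<Sum>i=1..N. ?B i k (k + j) / (z - a i))) (at z)"
    if "1 \<le> j" for j
    unfolding h_def by (rule Rfun_has_field_derivative) (use assms that in auto)
  ultimately have "((\<lambda>w. ?P w (l - k) * \<Phi> w) has_field_derivative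
      (\<mu> * ?P z (l - k) + (\<Sum>j=1..l-k. (\<Sum>i=1..N. ?B i k (k + j) / (z - a i)) * ?P z (l - k - j)))
      * \<Phi> z) (at z)"
    by (intro partition_sum_mult_has_field_derivative)
  moreover have "(\<Sum>j=1..l-k. (\<Sum>i=1..N. ?B i k (k + j) / (z - a i)) * Mmat N n m m1 a c (k + j) l z)
      = (\<Sum>j=1..l-k. (\<Sum>i=1..N. ?B i k (k + j) / (z - a i)) * ?P z (l - k - j))"
    by (intro sum.cong refl) (subst Mmat_eq_partition_sum; auto)
  ultimately show ?thesis
    using True by (simp add: Mmat_eq_partition_sum \<mu>_def)
qed (simp add: Mmat_def)

theorem corollary1:
  fixes p n m N m1 :: nat
    and a \<theta> c :: "nat \<Rightarrow> complex"
    and U :: "complex set"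
    and L :: "nat \<Rightarrow> complex \<Rightarrow> complex"
  assumes pos: "p > 0" "n > 0" "m > 0" "N > 0"
    and cop: "coprime n m"
    and s_gt: "gcd m N > 1"
    and m1_def: "m = gcd m N * m1"
    and distinct: "inj_on a {1..N}"
    and U_open: "open U"
    and L_holo: "\<And>i. i \<in> {1..N} \<Longrightarrow> L i holomorphic_on U"
    and L_branch: "\<And>i z. i \<in> {1..N} \<Longrightarrow> z \<in> U \<Longrightarrow> exp (L i z) = z - a i"
  shows "\<forall>z\<in>U. \<forall>k\<in>{1..p}. \<forall>l\<in>{1..p}.
    ((\<lambda>w. Mmat N n m m1 a c k l w * (\<Prod>i=1..N. exp (beta n m \<theta> i l * L i w)))
      has_field_derivative
       (\<Sum>i=1..N. \<Sum>r=1..p. Bmat N n m m1 a \<theta> c i k r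
           * (Mmat N n m m1 a c r l z * (\<Prod>i'=1..N. exp (beta n m \<theta> i' l * L i' z)))
           / (z - a i))) (at z)"
proof (intro ballI)
  fix z k l assume z: "z \<in> U" and k: "k \<in> {1..p}" and l: "l \<in> {1..p}"
  let ?D = "\<lambda>w. \<Prod>i=1..N. exp (beta n m \<theta> i l * L i w)"
  have L': "(L i has_field_derivative 1 / (z - a i)) (at z)" if "i \<in> {1..N}" for i
    using U_open L_holo[OF that] L_branch[OF that] z by (rule log_branch_has_field_derivative)
  have "z \<noteq> a i" if "i \<in> {1..N}" for i
    using L_branch[OF that z] exp_not_eq_zero by force
  moreover have "(?D has_field_derivative (\<Sum>i=1..N. beta n m \<theta> i l / (z - a i)) * ?D z) (at z)"
    using L' by (rule exp_branch_prod_has_field_derivative)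
  ultimately have "((\<lambda>w. Mmat N n m m1 a c k l w * ?D w) has_field_derivative
      ((\<Sum>i=1..N. beta n m \<theta> i k / (z - a i)) * Mmat N n m m1 a c k l z
        + (\<Sum>j=1..l-k. (\<Sum>i=1..N. Bmat N n m m1 a \<theta> c i k (k + j) / (z - a i))
                         * Mmat N n m m1 a c (k + j) l z)) * ?D z) (at z)"
    using pos(2,3) m1_def k by (intro Mmat_mult_has_field_derivative) auto
  moreover have "l \<le> p" using l by simp
  ultimately show "((\<lambda>w. Mmat N n m m1 a c k l w * ?D w) has_field_derivative
      (\<Sum>i=1..N. \<Sum>r=1..p. Bmat N n m m1 a \<theta> c i k r * (Mmat N n m m1 a c r l z * ?D z) / (z - a i)))
      (at z)"
    using k by (simp only: Bmat_Mmat_sum)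
qed

end
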